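(* Let $\alpha,\beta>0$, let $c(\psi)=\sqrt{\alpha\cos^2\psi+\beta\sin^2\psi}$, let $p\ge 0$ be an integer, and let $X_{\Delta x}^p(\Omega)$ be the discontinuous piecewise polynomial space on the periodic mesh described in the context. Suppose $R,S,\psi:[0,T]\to X_{\Delta x}^p(\Omega)$ are differentiable in time and, for every $t\in[0,T]$, satisfy (with $c=c(\psi(x,t))$ inside the integrals, $x$-derivatives taken cellwise, and all sums over $j=1,\dots,N$) $$\sum_j\int_{\Omega_j}R_t\phi\,dx+\sum_j\int_{\Omega_j}cR\phi_x\,dx-\sum_j\overline{c}_{j+1/2}\overline{R}_{j+1/2}\phi^-_{j+1/2}+\sum_j\overline{c}_{j-1/2}\overline{R}_{j-1/2}\phi^+_{j-1/2}=\mathcal{B}(\phi)$$ for all $\phi\in X_{\Delta x}^p(\Omega)$, $$\sum_j\int_{\Omega_j}S_t\eta\,dx-\sum_j\int_{\Omega_j}cS\eta_x\,dx+\sum_j\overline{c}_{j+1/2}\overline{S}_{j+1/2}\eta^-_{j+1/2}-\sum_j\overline{c}_{j-1/2}\overline{S}_{j-1/2}\eta^+_{j-1/2}=\mathcal{B}(\eta)$$ for all $\eta\in X_{\Delta x}^p(\Omega)$, and $\sum_j\int_{\Omega_j}\psi_t\zeta\,dx=\sum_j\int_{\Omega_j}\frac{R+S}{2}\zeta\,dx$ for all $\zeta\in X_{\Delta x}^p(\Omega)$, where for a test function $\chi$ $$\mathcal{B}(\chi)=\tfrac12\sum_j\int_{\Omega_j}c(R\chi)_x\,dx-\tfrac12\sum_j\overline{c}_{j+1/2}R^-_{j+1/2}\chi^-_{j+1/2}+\tfrac12\sum_j\overline{c}_{j-1/2}R^+_{j-1/2}\chi^+_{j-1/2}-\tfrac12\sum_j\int_{\Omega_j}c(S\chi)_x\,dx+\tfrac12\sum_j\overline{c}_{j+1/2}S^-_{j+1/2}\chi^-_{j+1/2}-\tfrac12\sum_j\overline{c}_{j-1/2}S^+_{j-1/2}\chi^+_{j-1/2}.$$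 Then $$\frac{d}{dt}\left(\sum_{j=1}^N\int_{\Omega_j}\frac{R^2+S^2}{2}\,dx\right)=0.$$
   Context: The domain $\Omega$ is partitioned into cells $\Omega_j=[x_{j-1/2},x_{j+1/2}]$, $j=1,\dots,N$, with $\Delta x_j=x_{j+1/2}-x_{j-1/2}$. $X_{\Delta x}^p(\Omega)=\{u\in L^2(\Omega): u|_{\Omega_j}$ is a polynomial of degree $\le p$ for each $j\}$. For a grid function $u$, $u^+_{j+1/2}$ and $u^-_{j+1/2}$ denote its traces at $x_{j+1/2}$ from the right and left respectively; $\overline{u}_{j+1/2}=(u^+_{j+1/2}+u^-_{j+1/2})/2$ and $\llbracket u\rrbracket_{j+1/2}=u^+_{j+1/2}-u^-_{j+1/2}$. Also $c^\pm_{j+1/2}=c(\psi^\pm_{j+1/2})$ and $\overline{c}_{j+1/2}=(c^+_{j+1/2}+c^-_{j+1/2})/2$. Periodic boundary conditions: the endpoints $x_{1/2}$ and $x_{N+1/2}$ are identified, i.e. $u^-_{1/2}:=u^-_{N+1/2}$ (trace from cell $N$) and $u^+_{N+1/2}:=u^+_{1/2}$ (trace from cell $1$), for all grid functions including $\psi$ and the test functions. *)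

theory Defs
  imports "HOL-Analysis.Analysis" "HOL-Computational_Algebra.Polynomial"
begin

text \<open>Mesh: xn k = x_{k+1/2}, k = 0..N; cell j (j = 1..N) is [xn (j-1), xn j].
  A grid function in X^p is a family u :: nat => real poly, u j being the
  polynomial on cell j (only j = 1..N matter).\<close>

definition cfun :: "real \<Rightarrow> real \<Rightarrow> real \<Rightarrow> real" where
  "cfun \<alpha> \<beta> y = sqrt (\<alpha> * (cos y)\<^sup>2 + \<beta> * (sin y)\<^sup>2)"

definition inX :: "nat \<Rightarrow> nat \<Rightarrow> (nat \<Rightarrow> real poly) \<Rightarrow> bool" where
  "inX p N u \<longleftrightarrow> (\<forall>j\<in>{1..N}. degree (u j) \<le> p)"

definition cellint :: "(nat \<Rightarrow> real) \<Rightarrow> nat \<Rightarrow> (real \<Rightarrow> real) \<Rightarrow> real" where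
  "cellint xn j f = integral {xn (j - 1)..xn j} f"

text \<open>Left trace u^-_{k+1/2} and right trace u^+_{k+1/2}, k = 0..N, periodic.\<close>
definition trm :: "(nat \<Rightarrow> real) \<Rightarrow> nat \<Rightarrow> (nat \<Rightarrow> real poly) \<Rightarrow> nat \<Rightarrow> real" where
  "trm xn N u k = (if k = 0 then poly (u N) (xn N) else poly (u k) (xn k))"

definition trp :: "(nat \<Rightarrow> real) \<Rightarrow> nat \<Rightarrow> (nat \<Rightarrow> real poly) \<Rightarrow> nat \<Rightarrow> real" where
  "trp xn N u k = (if k = N then poly (u 1) (xn 0) else poly (u (Suc k)) (xn k))"

definition avg :: "(nat \<Rightarrow> real) \<Rightarrow> nat \<Rightarrow> (nat \<Rightarrow> real poly) \<Rightarrow> nat \<Rightarrow> real" where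
  "avg xn N u k = (trp xn N u k + trm xn N u k) / 2"

definition cbar :: "real \<Rightarrow> real \<Rightarrow> (nat \<Rightarrow> real) \<Rightarrow> nat \<Rightarrow> (nat \<Rightarrow> real poly) \<Rightarrow> nat \<Rightarrow> real" where
  "cbar \<alpha> \<beta> xn N \<psi> k = (cfun \<alpha> \<beta> (trp xn N \<psi> k) + cfun \<alpha> \<beta> (trm xn N \<psi> k)) / 2"

definition Bterm :: "real \<Rightarrow> real \<Rightarrow> (nat \<Rightarrow> real) \<Rightarrow> nat \<Rightarrow> (nat \<Rightarrow> real poly)
    \<Rightarrow> (nat \<Rightarrow> real poly) \<Rightarrow> (nat \<Rightarrow> real poly) \<Rightarrow> (nat \<Rightarrow> real poly) \<Rightarrow> real" where
  "Bterm \<alpha> \<beta> xn N \<psi> R S w =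
     (1/2) * (\<Sum>j=1..N. cellint xn j (\<lambda>x. cfun \<alpha> \<beta> (poly (\<psi> j) x) * poly (pderiv (R j * w j)) x))
   - (1/2) * (\<Sum>j=1..N. cbar \<alpha> \<beta> xn N \<psi> j * trm xn N R j * trm xn N w j)
   + (1/2) * (\<Sum>j=1..N. cbar \<alpha> \<beta> xn N \<psi> (j - 1) * trp xn N R (j - 1) * trp xn N w (j - 1))
   - (1/2) * (\<Sum>j=1..N. cellint xn j (\<lambda>x. cfun \<alpha> \<beta> (poly (\<psi> j) x) * poly (pderiv (S j * w j)) x))
   + (1/2) * (\<Sum>j=1..N. cbar \<alpha> \<beta> xn N \<psi> j * trm xn N S j * trm xn N w j)
   - (1/2) * (\<Sum>j=1..N. cbar \<alpha> \<beta> xn N \<psi> (j - 1) * trp xn N S (j - 1) * trp xn N w (j - 1))"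

end

theory Submission
  imports Defs
begin

text \<open>Test the R-equation with \<open>\<phi> = R\<close>, the S-equation with \<open>\<eta> = S\<close>, and add. Since
  \<open>(R\<^sup>2)\<^sub>x = 2 R R\<^sub>x\<close> and the mixed terms \<open>(RS)\<^sub>x\<close> cancel, \<open>\<B>(R) + \<B>(S)\<close> reproduces the volume
  terms \<open>\<integral> c R R\<^sub>x\<close> and \<open>\<integral> c S S\<^sub>x\<close> exactly; after a periodic index shift the central fluxes cancel
  at every interface. What is left is \<open>\<Sum>\<integral> R\<^sub>t R + S\<^sub>t S\<close>, the time derivative of the energy.\<close>

lemma poly_altdef_degree_le:
  fixes P :: "'a::{comm_semiring_0,semiring_1} poly"
  assumes "degree P \<le> n"
  shows "poly P x = (\<Sum>i\<le>n. coeff P i * x ^ i)"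
proof -
  have "poly P x = (\<Sum>i\<le>degree P. coeff P i * x ^ i)" by (rule poly_altdef)
  also have "\<dots> = (\<Sum>i\<le>n. coeff P i * x ^ i)"
    by (rule sum.mono_neutral_left) (use assms in \<open>auto simp: coeff_eq_0\<close>)
  finally show ?thesis .
qed

lemma integral_poly_mult_eq_coeff_sum:
  fixes P Q :: "real poly"
  assumes "degree P \<le> n" "degree Q \<le> n"
  shows "integral {a..b} (\<lambda>x. poly P x * poly Q x)
     = (\<Sum>i\<le>n. \<Sum>k\<le>n. coeff P i * coeff Q k * integral {a..b} (\<lambda>x. x ^ (i + k)))"
proof -
  have "(\<lambda>x. poly P x * poly Q x) = (\<lambda>x. \<Sum>i\<le>n. \<Sum>k\<le>n. coeff P i * coeff Q k * x ^ (i + k))"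
    by (simp add: poly_altdef_degree_le[OF assms(1)] poly_altdef_degree_le[OF assms(2)]
        sum_product power_add algebra_simps)
  then show ?thesis
    by (simp add: integral_sum integrable_continuous_interval continuous_intros)
qed

lemma has_real_derivative_integral_poly_mult:
  fixes P Q :: "real \<Rightarrow> real poly"
  assumes "t \<in> A"
    and "\<forall>s\<in>A. degree (P s) \<le> n" "\<forall>s\<in>A. degree (Q s) \<le> n" "degree P' \<le> n" "degree Q' \<le> n"
    and P': "\<And>i. ((\<lambda>s. coeff (P s) i) has_real_derivative coeff P' i) (at t within A)"
    and Q': "\<And>i. ((\<lambda>s. coeff (Q s) i) has_real_derivative coeff Q' i) (at t within A)"
  shows "((\<lambda>s. integral {a..b} (\<lambda>x. poly (P s) x * poly (Q s) x)) has_real_derivative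
      integral {a..b} (\<lambda>x. poly P' x * poly (Q t) x) + integral {a..b} (\<lambda>x. poly (P t) x * poly Q' x))
      (at t within A)"
proof -
  \<comment> \<open>The integral is a bilinear form in the coefficients, so the product rule applies termwise.\<close>
  define M where "M i k = integral {a..b} (\<lambda>x::real. x ^ (i + k))" for i k
  have "((\<lambda>s. \<Sum>i\<le>n. \<Sum>k\<le>n. coeff (P s) i * coeff (Q s) k * M i k) has_real_derivative
      (\<Sum>i\<le>n. \<Sum>k\<le>n. coeff P' i * coeff (Q t) k * M i k + coeff (P t) i * coeff Q' k * M i k))
      (at t within A)"
  proof (intro DERIV_sum)
    fix i k
    show "((\<lambda>s. coeff (P s) i * coeff (Q s) k * M i k) has_real_derivative
        coeff P' i * coeff (Q t) k * M i k + coeff (P t) i * coeff Q' k * M i k) (at t within A)"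
      using DERIV_cmult_right[OF DERIV_mult[OF P' Q'], of i k "M i k"] by (simp add: algebra_simps)
  qed
  also have "(\<Sum>i\<le>n. \<Sum>k\<le>n. coeff P' i * coeff (Q t) k * M i k + coeff (P t) i * coeff Q' k * M i k)
      = integral {a..b} (\<lambda>x. poly P' x * poly (Q t) x) + integral {a..b} (\<lambda>x. poly (P t) x * poly Q' x)"
    using assms by (simp add: integral_poly_mult_eq_coeff_sum[of _ n] M_def sum.distrib)
  finally show ?thesis
    by (rule has_field_derivative_transform_within[OF _ zero_less_one assms(1)])
       (use assms(2,3) in \<open>simp add: integral_poly_mult_eq_coeff_sum[of _ n] M_def\<close>)
qed

lemma has_real_derivative_dg_energy:
  fixes R S :: "real \<Rightarrow> nat \<Rightarrow> real poly" and Rt St :: "nat \<Rightarrow> real poly"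
  assumes "t \<in> A"
    and deg: "\<forall>s\<in>A. \<forall>j\<in>{1..N}. degree (R s j) \<le> n \<and> degree (S s j) \<le> n"
    and deg': "\<forall>j\<in>{1..N}. degree (Rt j) \<le> n \<and> degree (St j) \<le> n"
    and dR: "\<forall>j\<in>{1..N}. \<forall>i. ((\<lambda>s. coeff (R s j) i) has_real_derivative coeff (Rt j) i) (at t within A)"
    and dS: "\<forall>j\<in>{1..N}. \<forall>i. ((\<lambda>s. coeff (S s j) i) has_real_derivative coeff (St j) i) (at t within A)"
  shows "((\<lambda>s. \<Sum>j=1..N. cellint xn j (\<lambda>x. ((poly (R s j) x)\<^sup>2 + (poly (S s j) x)\<^sup>2) / 2))
      has_real_derivative (\<Sum>j=1..N. cellint xn j (\<lambda>x. poly (Rt j) x * poly (R t j) x))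
        + (\<Sum>j=1..N. cellint xn j (\<lambda>x. poly (St j) x * poly (S t j) x))) (at t within A)"
  unfolding sum.distrib[symmetric]
proof (intro DERIV_sum)
  fix j assume j: "j \<in> {1..N}"
  let ?I = "\<lambda>P Q. integral {xn (j - 1)..xn j} (\<lambda>x. poly P x * poly Q x)"
  have half_squares: "cellint xn j (\<lambda>x. ((poly (R s j) x)\<^sup>2 + (poly (S s j) x)\<^sup>2) / 2)
      = ?I (R s j) (R s j) / 2 + ?I (S s j) (S s j) / 2" for s
  proof -
    have "(\<lambda>x. ((poly (R s j) x)\<^sup>2 + (poly (S s j) x)\<^sup>2) / 2)
        = (\<lambda>x. poly (R s j) x * poly (R s j) x / 2 + poly (S s j) x * poly (S s j) x / 2)"
      by (simp add: power2_eq_square add_divide_distrib)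
    then show ?thesis
      unfolding cellint_def
      by (simp add: integral_add integral_divide integrable_continuous_interval continuous_intros)
  qed
  have "((\<lambda>s. ?I (R s j) (R s j)) has_real_derivative ?I (Rt j) (R t j) + ?I (R t j) (Rt j)) (at t within A)"
    by (rule has_real_derivative_integral_poly_mult[where n = n]) (use assms j in auto)
  moreover have "((\<lambda>s. ?I (S s j) (S s j)) has_real_derivative ?I (St j) (S t j) + ?I (S t j) (St j)) (at t within A)"
    by (rule has_real_derivative_integral_poly_mult[where n = n]) (use assms j in auto)
  ultimately have "((\<lambda>s. ?I (R s j) (R s j) / 2 + ?I (S s j) (S s j) / 2) has_real_derivative
      (?I (Rt j) (R t j) + ?I (R t j) (Rt j)) / 2 + (?I (St j) (S t j) + ?I (S t j) (St j)) / 2) (at t within A)"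
    by (intro DERIV_add DERIV_cdivide)
  then show "((\<lambda>s. cellint xn j (\<lambda>x. ((poly (R s j) x)\<^sup>2 + (poly (S s j) x)\<^sup>2) / 2)) has_real_derivative
      cellint xn j (\<lambda>x. poly (Rt j) x * poly (R t j) x) + cellint xn j (\<lambda>x. poly (St j) x * poly (S t j) x))
      (at t within A)"
    unfolding half_squares by (simp add: cellint_def mult.commute)
qed

lemma sum_shift_periodic:
  fixes f :: "nat \<Rightarrow> 'a::comm_monoid_add"
  assumes "N \<ge> 1" "f 0 = f N"
  shows "(\<Sum>j=1..N. f (j - 1)) = (\<Sum>j=1..N. f j)"
proof -
  obtain M where N: "N = Suc M" using assms(1) by (cases N) auto
  have "(\<Sum>j=1..N. f (j - 1)) = (\<Sum>j=0..M. f j)"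
    unfolding N using sum.shift_bounds_cl_Suc_ivl[of "\<lambda>j. f (j - 1)" 0 M] by simp
  also have "\<dots> = f 0 + (\<Sum>j=1..M. f j)" by (simp add: sum.atLeast_Suc_atMost)
  also have "\<dots> = (\<Sum>j=1..N. f j)" using assms(2) unfolding N by (simp add: add.commute)
  finally show ?thesis .
qed

lemma central_flux_balance:
  fixes c mR pR mS pS :: "nat \<Rightarrow> real"
  assumes "N \<ge> 1" and "c 0 = c N" "mR 0 = mR N" "pR 0 = pR N" "mS 0 = mS N" "pS 0 = pS N"
  shows "- (\<Sum>j=1..N. c j * ((pR j + mR j) / 2) * mR j)
      + (\<Sum>j=1..N. c (j - 1) * ((pR (j - 1) + mR (j - 1)) / 2) * pR (j - 1))
      + (\<Sum>j=1..N. c j * ((pS j + mS j) / 2) * mS j)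
      - (\<Sum>j=1..N. c (j - 1) * ((pS (j - 1) + mS (j - 1)) / 2) * pS (j - 1))
    = - (1/2) * (\<Sum>j=1..N. c j * mR j * mR j)
      + (1/2) * (\<Sum>j=1..N. c (j - 1) * pR (j - 1) * pR (j - 1))
      + (1/2) * (\<Sum>j=1..N. c j * mS j * mR j)
      - (1/2) * (\<Sum>j=1..N. c (j - 1) * pS (j - 1) * pR (j - 1))
      - (1/2) * (\<Sum>j=1..N. c j * mR j * mS j)
      + (1/2) * (\<Sum>j=1..N. c (j - 1) * pR (j - 1) * pS (j - 1))
      + (1/2) * (\<Sum>j=1..N. c j * mS j * mS j)
      - (1/2) * (\<Sum>j=1..N. c (j - 1) * pS (j - 1) * pS (j - 1))"
  \<comment> \<open>Once the sums over left interfaces are shifted periodically, the identity holds interface by interface.\<close>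
  apply (subst (1 2 3 4 5 6) sum_shift_periodic[OF assms(1)])
  apply (simp_all add: assms)
  apply (simp add: sum_distrib_left sum_subtractf[symmetric] sum.distrib[symmetric]
      flip: sum_negf sum_divide_distrib add_divide_distrib diff_divide_distrib)
  apply (rule sum.cong; simp add: algebra_simps)
  done

lemma cellint_pderiv_square:
  "cellint xn j (\<lambda>x. w x * poly (pderiv (P * P)) x)
     = 2 * cellint xn j (\<lambda>x. w x * poly P x * poly (pderiv P) x)"
proof -
  have "(\<lambda>x. w x * poly (pderiv (P * P)) x) = (\<lambda>x. 2 * (w x * poly P x * poly (pderiv P) x))"
    by (simp add: pderiv_mult algebra_simps)
  then show ?thesis unfolding cellint_def by simp
qed

lemma dg_energy_rate_zero:
  fixes R S Rt St \<psi> :: "nat \<Rightarrow> real poly"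
  assumes "N \<ge> 1"
    and eqR: "(\<Sum>j=1..N. cellint xn j (\<lambda>x. poly (Rt j) x * poly (R j) x))
      + (\<Sum>j=1..N. cellint xn j (\<lambda>x. cfun \<alpha> \<beta> (poly (\<psi> j) x) * poly (R j) x * poly (pderiv (R j)) x))
      - (\<Sum>j=1..N. cbar \<alpha> \<beta> xn N \<psi> j * avg xn N R j * trm xn N R j)
      + (\<Sum>j=1..N. cbar \<alpha> \<beta> xn N \<psi> (j - 1) * avg xn N R (j - 1) * trp xn N R (j - 1))
      = Bterm \<alpha> \<beta> xn N \<psi> R S R"
    and eqS: "(\<Sum>j=1..N. cellint xn j (\<lambda>x. poly (St j) x * poly (S j) x))
      - (\<Sum>j=1..N. cellint xn j (\<lambda>x. cfun \<alpha> \<beta> (poly (\<psi> j) x) * poly (S j) x * poly (pderiv (S j)) x))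
      + (\<Sum>j=1..N. cbar \<alpha> \<beta> xn N \<psi> j * avg xn N S j * trm xn N S j)
      - (\<Sum>j=1..N. cbar \<alpha> \<beta> xn N \<psi> (j - 1) * avg xn N S (j - 1) * trp xn N S (j - 1))
      = Bterm \<alpha> \<beta> xn N \<psi> R S S"
  shows "(\<Sum>j=1..N. cellint xn j (\<lambda>x. poly (Rt j) x * poly (R j) x))
       + (\<Sum>j=1..N. cellint xn j (\<lambda>x. poly (St j) x * poly (S j) x)) = 0"
proof -
  let ?c = "\<lambda>j x. cfun \<alpha> \<beta> (poly (\<psi> j) x)"
  have mixed: "(\<Sum>j=1..N. cellint xn j (\<lambda>x. ?c j x * poly (pderiv (S j * R j)) x))
      = (\<Sum>j=1..N. cellint xn j (\<lambda>x. ?c j x * poly (pderiv (R j * S j)) x))"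
    by (simp add: mult.commute)
  note flux = central_flux_balance[OF assms(1), of "cbar \<alpha> \<beta> xn N \<psi>"
      "trm xn N R" "trp xn N R" "trm xn N S" "trp xn N S"]
  have period: "cbar \<alpha> \<beta> xn N \<psi> 0 = cbar \<alpha> \<beta> xn N \<psi> N" "trm xn N u 0 = trm xn N u N"
      "trp xn N u 0 = trp xn N u N" for u
    using assms(1) by (simp_all add: cbar_def trm_def trp_def)
  show ?thesis
    using eqR eqS flux[OF period(1) period(2,3) period(2,3)] mixed
    unfolding Bterm_def avg_def cellint_pderiv_square sum_distrib_left[symmetric]
    by linarith
qed

theorem proposition2p1:
  fixes \<alpha> \<beta> T :: real and p N :: nat and xn :: "nat \<Rightarrow> real"
    and R S \<psi> Rt St \<psi>t :: "real \<Rightarrow> nat \<Rightarrow> real poly"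
  assumes "\<alpha> > 0" and "\<beta> > 0"
    and "N \<ge> 1" and mesh: "\<forall>k<N. xn k < xn (Suc k)"
    and inX: "\<forall>t\<in>{0..T}. inX p N (R t) \<and> inX p N (S t) \<and> inX p N (\<psi> t)
                 \<and> inX p N (Rt t) \<and> inX p N (St t) \<and> inX p N (\<psi>t t)"
    and dR: "\<forall>t\<in>{0..T}. \<forall>j\<in>{1..N}. \<forall>i.
               ((\<lambda>s. coeff (R s j) i) has_real_derivative coeff (Rt t j) i) (at t within {0..T})"
    and dS: "\<forall>t\<in>{0..T}. \<forall>j\<in>{1..N}. \<forall>i.
               ((\<lambda>s. coeff (S s j) i) has_real_derivative coeff (St t j) i) (at t within {0..T})"
    and d\<psi>: "\<forall>t\<in>{0..T}. \<forall>j\<in>{1..N}. \<forall>i.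
               ((\<lambda>s. coeff (\<psi> s j) i) has_real_derivative coeff (\<psi>t t j) i) (at t within {0..T})"
    and eqR: "\<forall>t\<in>{0..T}. \<forall>\<phi>. inX p N \<phi> \<longrightarrow>
        (\<Sum>j=1..N. cellint xn j (\<lambda>x. poly (Rt t j) x * poly (\<phi> j) x))
      + (\<Sum>j=1..N. cellint xn j (\<lambda>x. cfun \<alpha> \<beta> (poly (\<psi> t j) x) * poly (R t j) x * poly (pderiv (\<phi> j)) x))
      - (\<Sum>j=1..N. cbar \<alpha> \<beta> xn N (\<psi> t) j * avg xn N (R t) j * trm xn N \<phi> j)
      + (\<Sum>j=1..N. cbar \<alpha> \<beta> xn N (\<psi> t) (j - 1) * avg xn N (R t) (j - 1) * trp xn N \<phi> (j - 1))
      = Bterm \<alpha> \<beta> xn N (\<psi> t) (R t) (S t) \<phi>"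
    and eqS: "\<forall>t\<in>{0..T}. \<forall>\<eta>. inX p N \<eta> \<longrightarrow>
        (\<Sum>j=1..N. cellint xn j (\<lambda>x. poly (St t j) x * poly (\<eta> j) x))
      - (\<Sum>j=1..N. cellint xn j (\<lambda>x. cfun \<alpha> \<beta> (poly (\<psi> t j) x) * poly (S t j) x * poly (pderiv (\<eta> j)) x))
      + (\<Sum>j=1..N. cbar \<alpha> \<beta> xn N (\<psi> t) j * avg xn N (S t) j * trm xn N \<eta> j)
      - (\<Sum>j=1..N. cbar \<alpha> \<beta> xn N (\<psi> t) (j - 1) * avg xn N (S t) (j - 1) * trp xn N \<eta> (j - 1))
      = Bterm \<alpha> \<beta> xn N (\<psi> t) (R t) (S t) \<eta>"
    and eq\<psi>: "\<forall>t\<in>{0..T}. \<forall>\<zeta>. inX p N \<zeta> \<longrightarrow>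
        (\<Sum>j=1..N. cellint xn j (\<lambda>x. poly (\<psi>t t j) x * poly (\<zeta> j) x))
      = (\<Sum>j=1..N. cellint xn j (\<lambda>x. (poly (R t j) x + poly (S t j) x) / 2 * poly (\<zeta> j) x))"
  shows "\<forall>t\<in>{0..T}.
    ((\<lambda>s. \<Sum>j=1..N. cellint xn j (\<lambda>x. ((poly (R s j) x)\<^sup>2 + (poly (S s j) x)\<^sup>2) / 2))
       has_real_derivative 0) (at t within {0..T})"
proof
  fix t assume t: "t \<in> {0..T}"
  have deg: "\<forall>s\<in>{0..T}. \<forall>j\<in>{1..N}. degree (R s j) \<le> p \<and> degree (S s j) \<le> p"
    and deg': "\<forall>j\<in>{1..N}. degree (Rt t j) \<le> p \<and> degree (St t j) \<le> p"
    using inX t by (auto simp: inX_def)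
  have "(\<Sum>j=1..N. cellint xn j (\<lambda>x. poly (Rt t j) x * poly (R t j) x))
      + (\<Sum>j=1..N. cellint xn j (\<lambda>x. poly (St t j) x * poly (S t j) x)) = 0"
    using dg_energy_rate_zero[OF \<open>N \<ge> 1\<close> eqR[rule_format, OF t] eqS[rule_format, OF t]] inX t
    by blast
  then show "((\<lambda>s. \<Sum>j=1..N. cellint xn j (\<lambda>x. ((poly (R s j) x)\<^sup>2 + (poly (S s j) x)\<^sup>2) / 2))
      has_real_derivative 0) (at t within {0..T})"
    using has_real_derivative_dg_energy[where xn = xn, OF t deg deg' bspec[OF dR t] bspec[OF dS t]] by simp
qed

end
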